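(* Let $K$ be a link in $S^3$. For a random $(r,2s-1)$-meander link $L$, the probability that $L$ is isotopic to $K$ tends to $0$ as $r\to\infty$ (for any choice of $s=s(r)\ge1$).
   Context: A $p$-string of length $s$ is a correctly matched string of $s$ pairs of parentheses; there are $C_s=\frac{1}{s+1}\binom{2s}{s}$ of them. Given $p$-strings $U$ (upper), $W$ (lower) of length $s$, the meander graph is obtained by marking points $0,1,\dots,2s$ on the $x$-axis, taking the segment $[0,2s]$, joining points $a,b$ by an upper semicircle for each matched pair of $U$ at positions $a<b$ (positions $1,\dots,2s$), and points $a-1,b-1$ by a lower semicircle for each matched pair of $W$ at positions $a<b$; the points $1,\dots,2s-1$ are vertices. For $r\ge1$, replacing every closed curve of this picture by $r$ parallel copies gives the $(r,2s-1)$-meander graph with $(2s-1)r^2$ vertices; choosing over/under information at each vertex gives an $(r,2s-1)$-meander link. A random $(r,2s-1)$-meander link: $(U,W)$ uniform among the $C_s^2$ pairs and crossing information independent and uniform. *)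

theory Defs
  imports "HOL-Analysis.Analysis"
begin

section \<open>p-strings (balanced parenthesis strings), True = '(' and False = ')'\<close>

definition depth :: "bool list \<Rightarrow> int" where
  "depth xs = (\<Sum>x\<leftarrow>xs. if x then 1 else -1)"

definition balanced :: "bool list \<Rightarrow> bool" where
  "balanced xs \<longleftrightarrow> (\<forall>n\<le>length xs. depth (take n xs) \<ge> 0) \<and> depth xs = 0"

definition pstrings :: "nat \<Rightarrow> bool list set" where
  "pstrings s = {xs. length xs = 2 * s \<and> balanced xs}"

text \<open>Positions a < b (1-based, in 1..2s) form a matched pair of xs.\<close>
definition matched :: "bool list \<Rightarrow> nat \<Rightarrow> nat \<Rightarrow> bool" where
  "matched xs a b \<longleftrightarrow> 1 \<le> a \<and> a < b \<and> b \<le> length xs \<and> xs ! (a - 1) \<and> \<not> xs ! (b - 1)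
     \<and> balanced (take (b - a - 1) (drop a xs))"

type_synonym R3 = "real \<times> real \<times> real"

text \<open>Offset of the i-th parallel copy (i = 1..r); all offsets lie in (-1/8,1/8).\<close>
definition delta :: "nat \<Rightarrow> nat \<Rightarrow> real" where
  "delta r i = (2 * real i - real r - 1) / (8 * real r)"

text \<open>Tent function used to lift the over-strand at a crossing.\<close>
definition tent :: "nat \<Rightarrow> real \<Rightarrow> real" where
  "tent r t = max 0 (1 - 8 * real r * \<bar>t\<bar>)"

definition upper_arc :: "nat \<Rightarrow> nat \<Rightarrow> nat \<Rightarrow> nat \<Rightarrow> R3 set" where
  "upper_arc r a b i =
     (\<lambda>\<theta>. ((real a + real b) / 2 + ((real b - real a) / 2 + delta r i) * cos \<theta>,
           1/4 + ((real b - real a) / 2 + delta r i) * sin \<theta>, 0)) ` {0..pi}"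

definition lower_arc :: "nat \<Rightarrow> nat \<Rightarrow> nat \<Rightarrow> nat \<Rightarrow> R3 set" where
  "lower_arc r a b i =
     (\<lambda>\<theta>. ((real a + real b) / 2 - 1 + ((real b - real a) / 2 + delta r i) * cos \<theta>,
           - 1/4 - ((real b - real a) / 2 + delta r i) * sin \<theta>, 0)) ` {0..pi}"

text \<open>Crossings: (k,i,j) is the crossing near vertex k (k = 1..2s-1) of the i-th copy of the
  transversal strand through k with the j-th copy of the segment [0,2s].\<close>
definition crossings :: "nat \<Rightarrow> nat \<Rightarrow> (nat \<times> nat \<times> nat) set" where
  "crossings r s = {1..2 * s - 1} \<times> {1..r} \<times> {1..r}"

text \<open>Crossing information: c (k,i,j) = True iff the segment copy passes over.\<close>
definition crossing_choices :: "nat \<Rightarrow> nat \<Rightarrow> (nat \<times> nat \<times> nat \<Rightarrow> bool) set" where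
  "crossing_choices r s = PiE (crossings r s) (\<lambda>_. UNIV)"

definition zH :: "nat \<Rightarrow> nat \<Rightarrow> (nat \<times> nat \<times> nat \<Rightarrow> bool) \<Rightarrow> nat \<Rightarrow> real \<Rightarrow> real" where
  "zH r s c j x = (\<Sum>k\<in>{1..2 * s - 1}. \<Sum>i\<in>{1..r}.
       if c (k, i, j) then tent r (x - real k - delta r i) else 0)"

definition zV :: "nat \<Rightarrow> (nat \<times> nat \<times> nat \<Rightarrow> bool) \<Rightarrow> nat \<Rightarrow> nat \<Rightarrow> real \<Rightarrow> real" where
  "zV r c k i y = (\<Sum>j\<in>{1..r}. if c (k, i, j) then 0 else tent r (y - delta r j))"

text \<open>The meander link in R^3 (a PL/analytic realisation of the r-parallel meander diagram,
  shifted vertically near the axis so that the crossings form exact grids).\<close>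
definition meander_R3 ::
  "nat \<Rightarrow> nat \<Rightarrow> bool list \<Rightarrow> bool list \<Rightarrow> (nat \<times> nat \<times> nat \<Rightarrow> bool) \<Rightarrow> R3 set" where
  "meander_R3 r s U W c =
     (\<Union>(a, b)\<in>{(a, b). matched U a b}. \<Union>i\<in>{1..r}. upper_arc r a b i)
   \<union> (\<Union>(a, b)\<in>{(a, b). matched W a b}. \<Union>i\<in>{1..r}. lower_arc r a b i)
   \<union> (\<Union>k\<in>{1..2 * s - 1}. \<Union>i\<in>{1..r}.
        (\<lambda>y. (real k + delta r i, y, zV r c k i y)) ` {-1/4..1/4})
   \<union> (\<Union>j\<in>{1..r}. (\<lambda>x. (x, delta r j, zH r s c j x)) ` {- delta r j .. 2 * real s - delta r j})
   \<union> (\<Union>j\<in>{1..r}. (\<lambda>y. (- delta r j, y, 0)) ` {-1/4 .. delta r j})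
   \<union> (\<Union>j\<in>{1..r}. (\<lambda>y. (2 * real s - delta r j, y, 0)) ` {delta r j .. 1/4})"

definition S3 :: "(R3 \<times> real) set" where
  "S3 = sphere 0 1"

definition inv_stereo :: "R3 \<Rightarrow> R3 \<times> real" where
  "inv_stereo p = (scaleR (2 / ((norm p)\<^sup>2 + 1)) p, ((norm p)\<^sup>2 - 1) / ((norm p)\<^sup>2 + 1))"

definition meander_link ::
  "nat \<Rightarrow> nat \<Rightarrow> bool list \<Rightarrow> bool list \<Rightarrow> (nat \<times> nat \<times> nat \<Rightarrow> bool) \<Rightarrow> (R3 \<times> real) set" where
  "meander_link r s U W c = inv_stereo ` meander_R3 r s U W c"

definition is_link :: "(R3 \<times> real) set \<Rightarrow> bool" where
  "is_link K \<longleftrightarrow> K \<subseteq> S3 \<and> (\<exists>n::nat. n \<ge> 1 \<and> K homeomorphic ({..<n} \<times> sphere (0::complex) 1))"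

definition ambient_isotopic :: "(R3 \<times> real) set \<Rightarrow> (R3 \<times> real) set \<Rightarrow> bool" where
  "ambient_isotopic A B \<longleftrightarrow>
     (\<exists>H :: real \<times> (R3 \<times> real) \<Rightarrow> R3 \<times> real.
        continuous_on ({0..1} \<times> S3) H \<and> H ` ({0..1} \<times> S3) \<subseteq> S3 \<and>
        (\<forall>t\<in>{0..1}. \<exists>g. homeomorphism S3 S3 (\<lambda>x. H (t, x)) g) \<and>
        (\<forall>x\<in>S3. H (0, x) = x) \<and> (\<lambda>x. H (1, x)) ` A = B)"

text \<open>Probability that a random (r,2s-1)-meander link is isotopic to K
  (uniform over U, W and independent uniform crossing information).\<close>
definition meander_isotopy_prob :: "nat \<Rightarrow> nat \<Rightarrow> (R3 \<times> real) set \<Rightarrow> real" where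
  "meander_isotopy_prob r s K =
     real (card {(U, W, c). U \<in> pstrings s \<and> W \<in> pstrings s \<and> c \<in> crossing_choices r s \<and>
                            ambient_isotopic (meander_link r s U W c) K})
     / real (card (pstrings s \<times> pstrings s \<times> crossing_choices r s))"

end

theory Submission
  imports Defs
begin

(* A link homeomorphic to n circles has n components, while every (r,2s-1)-meander link has at
   least r div 2; so for r > 2n + 1 no meander link is isotopic to K and the probability is 0.
   To count components, call layer i the union of all strands drawn at offset delta r i.
   Layers whose offsets differ in absolute value are disjoint: their arcs are concentric with
   different radii (matched pairs are nested or disjoint), their transversal strands lie at
   different distances from the integers, and at a crossing the two strands have different
   heights. Thus the absolute offset is a locally constant function on the compact union of the
   layers, and it takes at least r div 2 values. *)

definition prefix_depth :: "bool list \<Rightarrow> nat \<Rightarrow> int" where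
  "prefix_depth xs m = depth (take m xs)"

lemma depth_append: "depth (xs @ ys) = depth xs + depth ys"
  by (simp add: depth_def)

lemma prefix_depth_Suc:
  "m < length xs \<Longrightarrow> prefix_depth xs (Suc m) = prefix_depth xs m + (if xs ! m then 1 else -1)"
  by (simp add: prefix_depth_def take_Suc_conv_app_nth depth_append) (simp add: depth_def)

lemma prefix_depth_add:
  "a \<le> length xs \<Longrightarrow> prefix_depth xs (a + n) = prefix_depth xs a + depth (take n (drop a xs))"
  by (simp add: prefix_depth_def take_add depth_append)

lemma matched_prefix_depth:
  assumes "matched xs a b"
  shows "prefix_depth xs b = prefix_depth xs (a - 1)"
    and "\<And>m. a \<le> m \<Longrightarrow> m < b \<Longrightarrow> prefix_depth xs (a - 1) < prefix_depth xs m"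
proof -
  let ?h = "prefix_depth xs" and ?inner = "take (b - a - 1) (drop a xs)"
  have a: "1 \<le> a" "a < b" "b \<le> length xs" and open_a: "xs ! (a - 1)" and close_b: "\<not> xs ! (b - 1)"
    and bal: "balanced ?inner"
    using assms by (auto simp: matched_def)
  have h_a: "?h a = ?h (a - 1) + 1"
    using prefix_depth_Suc[of "a - 1" xs] a open_a by simp
  have h_inner: "?h (a + n) = ?h a + depth (take n ?inner)" if "n \<le> b - a - 1" for n
    using prefix_depth_add[of a xs n] a that by (simp add: min_def)
  have "depth ?inner = 0" using bal by (simp add: balanced_def)
  then have "?h (b - 1) = ?h a" using h_inner[of "b - a - 1"] a by simp
  moreover have "?h b = ?h (b - 1) - 1"
    using prefix_depth_Suc[of "b - 1" xs] a close_b by simp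
  ultimately show "?h b = ?h (a - 1)" using h_a by simp
  fix m assume "a \<le> m" "m < b"
  then have "depth (take (m - a) ?inner) \<ge> 0"
    using bal a unfolding balanced_def by auto
  then show "?h (a - 1) < ?h m"
    using h_inner[of "m - a"] h_a \<open>a \<le> m\<close> \<open>m < b\<close> by simp
qed

lemma matched_inside:
  assumes ab: "matched xs a b" and ab': "matched xs a' b'" and "a \<le> a'" "a' \<le> b"
  shows "b' \<le> b"
proof (rule ccontr)
  assume "\<not> b' \<le> b"
  then have "prefix_depth xs (a' - 1) < prefix_depth xs b"
    using matched_prefix_depth(2)[OF ab'] \<open>a' \<le> b\<close> by simp
  moreover have "prefix_depth xs (a - 1) \<le> prefix_depth xs (a' - 1)"
  proof (cases "a = a'")
    case False
    then have "a \<le> a' - 1" "a' - 1 < b" using \<open>a \<le> a'\<close> \<open>a' \<le> b\<close> by arith+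
    then show ?thesis using matched_prefix_depth(2)[OF ab] by (simp add: less_imp_le)
  qed simp
  ultimately show False using matched_prefix_depth(1)[OF ab] by simp
qed

lemma matched_strictly_inside:
  assumes ab: "matched xs a b" and ab': "matched xs a' b'" and "a < a'" "a' \<le> b"
  shows "b' < b"
proof -
  have "prefix_depth xs (a - 1) < prefix_depth xs (a' - 1)"
    using matched_prefix_depth(2)[OF ab, of "a' - 1"] \<open>a < a'\<close> \<open>a' \<le> b\<close> by simp
  then have "b' \<noteq> b"
    using matched_prefix_depth(1)[OF ab] matched_prefix_depth(1)[OF ab'] by auto
  with matched_inside[OF assms(1,2)] assms(3,4) show ?thesis by simp
qed

lemma matched_nested_or_disjoint:
  assumes "matched xs a b" "matched xs a' b'"
  shows "(a = a' \<and> b = b') \<or> (a < a' \<and> b' < b) \<or> (a' < a \<and> b < b') \<or> b < a' \<or> b' < a"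
  using matched_inside[OF assms] matched_inside[OF assms(2,1)]
    matched_strictly_inside[OF assms] matched_strictly_inside[OF assms(2,1)]
  by (metis antisym linorder_neqE_nat not_le)

lemma tent_at_0 [simp]: "tent r 0 = 1"
  by (simp add: tent_def)

lemma abs_delta_less:
  assumes "i \<in> {1..r}"
  shows "\<bar>delta r i\<bar> < 1/8"
proof -
  have "\<bar>2 * real i - real r - 1\<bar> < real r" using assms by auto
  then show ?thesis using assms by (simp add: delta_def abs_divide)
qed

lemma tent_grid:
  assumes i: "i \<in> {1..r}" and j: "j \<in> {1..r}"
  shows "tent r (real k + delta r i - real k' - delta r j) = (if k = k' \<and> i = j then 1 else 0)"
proof (cases "k = k' \<and> i = j")
  case False
  \<comment> \<open>The argument is an integer multiple of 1/(8r), with nonzero integer off the diagonal.\<close>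
  define N :: int where "N = 8 * int r * (int k - int k') + 2 * (int i - int j)"
  have r: "0 < real r" using i by simp
  have t: "real k + delta r i - real k' - delta r j = of_int N / (8 * real r)"
    using r by (simp add: N_def delta_def field_simps)
  have "N \<noteq> 0"
  proof (cases "k = k'")
    case False
    have "\<bar>int i - int j\<bar> < int r" using i j by auto
    moreover have "int r \<le> \<bar>int r * (int k - int k')\<bar>"
      using False i by (simp add: abs_mult)
    ultimately show ?thesis unfolding N_def by auto
  qed (use False N_def in simp)
  then have "1 \<le> \<bar>real_of_int N\<bar>" by linarith
  then have "1 \<le> 8 * real r * \<bar>real k + delta r i - real k' - delta r j\<bar>"
    using r by (simp add: t abs_divide)
  then show ?thesis using False by (simp add: tent_def)
qed simp

lemma zH_at_crossing:
  assumes k: "k \<in> {1..2 * s - 1}" and i: "i \<in> {1..r}"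
  shows "zH r s c j (real k + delta r i) = (if c (k, i, j) then 1 else 0)"
proof -
  have "(\<Sum>i'\<in>{1..r}. if c (k', i', j) then tent r (real k + delta r i - real k' - delta r i') else 0)
      = (if k' = k \<and> c (k, i, j) then 1 else 0)" (is "?row = _") for k'
  proof -
    have "?row = (\<Sum>i'\<in>{1..r}. if i' = i then (if k' = k \<and> c (k, i, j) then 1 else 0) else 0)"
      by (intro sum.cong refl) (simp only: tent_grid[OF i], auto)
    then show ?thesis using i by (simp add: sum.delta')
  qed
  then show ?thesis using k by (simp add: zH_def sum.delta' cong: if_cong)
qed

lemma zV_at_crossing:
  assumes j: "j \<in> {1..r}"
  shows "zV r c k i (delta r j) = (if c (k, i, j) then 0 else 1)"
proof -
  have "tent r (delta r j - delta r j') = (if j = j' then 1 else 0)" if "j' \<in> {1..r}" for j'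
    using tent_grid[OF j that, of 0 0] by simp
  then have "zV r c k i (delta r j) = (\<Sum>j'\<in>{1..r}. if j' = j \<and> \<not> c (k, i, j) then 1 else 0)"
    unfolding zV_def by (intro sum.cong refl) auto
  also have "\<dots> = (if c (k, i, j) then 0 else 1)" using j by (simp add: sum.delta')
  finally show ?thesis .
qed

lemma zV_neq_zH_at_crossing:
  assumes "k \<in> {1..2 * s - 1}" "i \<in> {1..r}" "j \<in> {1..r}"
  shows "zV r c k i (delta r j) \<noteq> zH r s c j (real k + delta r i)"
  using assms by (simp add: zV_at_crossing zH_at_crossing)

definition at_int_offset :: "real \<Rightarrow> real \<Rightarrow> bool" where
  "at_int_offset d x \<longleftrightarrow> (\<exists>n::int. x = of_int n + d \<or> x = of_int n - d)"

lemma at_int_offset_abs_eq: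
  assumes "at_int_offset d x" "at_int_offset e x" "\<bar>d\<bar> < 1/4" "\<bar>e\<bar> < 1/4"
  shows "\<bar>d\<bar> = \<bar>e\<bar>"
proof -
  obtain m d' where m: "x = of_int m + d'" "\<bar>d'\<bar> = \<bar>d\<bar>"
    using assms(1) unfolding at_int_offset_def by (metis abs_minus_cancel diff_conv_add_uminus)
  obtain n e' where n: "x = of_int n + e'" "\<bar>e'\<bar> = \<bar>e\<bar>"
    using assms(2) unfolding at_int_offset_def by (metis abs_minus_cancel diff_conv_add_uminus)
  have "\<bar>real_of_int (m - n)\<bar> < 1" using m n assms(3,4) by simp
  then have "m = n" by linarith
  then show ?thesis using m n by simp
qed

lemma dist_circle_point: "0 \<le> \<rho> \<Longrightarrow> dist (m + \<rho> * cos \<theta>, c + \<rho> * sin \<theta>) (m, c) = \<rho>"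
  by (simp add: dist_Pair_Pair dist_real_def power_mult_distrib flip: distrib_left)

lemma cos_eq_pm1_if_sin_eq_0:
  assumes "\<theta> \<in> {0..pi}" "sin \<theta> = 0"
  shows "cos \<theta> = 1 \<or> cos \<theta> = -1"
proof (cases "\<theta> = pi")
  case False
  then have "\<theta> = 0" using assms sin_eq_0_pi[of \<theta>] by auto
  then show ?thesis by simp
qed simp

lemma arc_radius_pos:
  assumes "i \<in> {1..r}" "a < b"
  shows "0 < (real b - real a) / 2 + delta r i"
proof -
  have "real a + 1 \<le> real b" using assms(2) by (simp add: nat_less_real_le)
  then show ?thesis using abs_delta_less[OF assms(1)] unfolding abs_less_iff by argo
qed

lemma upper_arc_point:
  assumes i: "i \<in> {1..r}" and ab: "a < b" and p: "p \<in> upper_arc r a b i"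
  obtains x y where "p = (x, y, 0)"
    "dist (x, y) ((real a + real b) / 2, 1/4) = (real b - real a) / 2 + delta r i"
    "1/4 \<le> y" "y = 1/4 \<Longrightarrow> at_int_offset (delta r i) x"
proof -
  let ?\<rho> = "(real b - real a) / 2 + delta r i"
  have \<rho>: "0 < ?\<rho>" by (rule arc_radius_pos[OF i ab])
  obtain \<theta> where \<theta>: "\<theta> \<in> {0..pi}"
    and p_eq: "p = ((real a + real b) / 2 + ?\<rho> * cos \<theta>, 1/4 + ?\<rho> * sin \<theta>, 0)"
    using p unfolding upper_arc_def by auto
  have "0 \<le> sin \<theta>" using \<theta> by (simp add: sin_ge_zero)
  moreover have "at_int_offset (delta r i) ((real a + real b) / 2 + ?\<rho> * cos \<theta>)" if "sin \<theta> = 0"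
    using cos_eq_pm1_if_sin_eq_0[OF \<theta> that] unfolding at_int_offset_def
    by (elim disjE) (rule exI[of _ "int b"] exI[of _ "int a"], simp add: field_simps)+
  ultimately show thesis
    using that[OF p_eq dist_circle_point] \<rho> by (simp add: zero_le_mult_iff)
qed

lemma lower_arc_point:
  assumes i: "i \<in> {1..r}" and ab: "a < b" and p: "p \<in> lower_arc r a b i"
  obtains x y where "p = (x, y, 0)"
    "dist (x, y) ((real a + real b) / 2 - 1, - 1/4) = (real b - real a) / 2 + delta r i"
    "y \<le> - 1/4" "y = - 1/4 \<Longrightarrow> at_int_offset (delta r i) x"
proof -
  let ?\<rho> = "(real b - real a) / 2 + delta r i"
  have \<rho>: "0 < ?\<rho>" by (rule arc_radius_pos[OF i ab])
  obtain \<theta> where \<theta>: "\<theta> \<in> {0..pi}"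
    and p_eq: "p = ((real a + real b) / 2 - 1 + ?\<rho> * cos (- \<theta>), - 1/4 + ?\<rho> * sin (- \<theta>), 0)"
    using p unfolding lower_arc_def by auto
  have "0 \<le> sin \<theta>" using \<theta> by (simp add: sin_ge_zero)
  moreover have "at_int_offset (delta r i) ((real a + real b) / 2 - 1 + ?\<rho> * cos (- \<theta>))"
    if "sin \<theta> = 0"
    using cos_eq_pm1_if_sin_eq_0[OF \<theta> that] unfolding at_int_offset_def
    by (elim disjE) (rule exI[of _ "int b - 1"] exI[of _ "int a - 1"], simp add: field_simps)+
  ultimately show thesis
    using that[OF p_eq dist_circle_point] \<rho> by (simp add: zero_le_mult_iff)
qed

lemma matched_arcs_offset_eq:
  fixes P :: "real \<times> real"
  assumes ab: "matched xs a b" and ab': "matched xs a' b'" and "\<bar>d\<bar> < 1/2" "\<bar>e\<bar> < 1/2"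
    and P: "dist P ((real a + real b) / 2 + t, y0) = (real b - real a) / 2 + d"
    and P': "dist P ((real a' + real b') / 2 + t, y0) = (real b' - real a') / 2 + e"
  shows "d = e"
proof -
  let ?C = "((real a + real b) / 2 + t, y0)" and ?C' = "((real a' + real b') / 2 + t, y0)"
  have CC': "dist ?C ?C' = \<bar>(real a + real b) / 2 - (real a' + real b') / 2\<bar>"
    by (simp add: dist_Pair_Pair dist_real_def)
  have tri: "dist P ?C' \<le> dist P ?C + dist ?C ?C'" "dist P ?C \<le> dist P ?C' + dist ?C ?C'"
    "dist ?C ?C' \<le> dist P ?C + dist P ?C'"
    by (metis dist_commute dist_triangle)+
  have "real a + 1 \<le> real b" "real a' + 1 \<le> real b'"
    using ab ab' by (simp_all add: matched_def nat_less_real_le)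
  consider "a = a'" "b = b'" | "a < a'" "b' < b" | "a' < a" "b < b'" | "b < a'" | "b' < a"
    using matched_nested_or_disjoint[OF ab ab'] by blast
  then show ?thesis
  proof cases
    case 1
    then show ?thesis using P P' by simp
  next
    case 2
    then have "dist ?C ?C' \<le> (real b - real a) / 2 - (real b' - real a') / 2 - 1"
      unfolding CC' abs_le_iff by (simp add: nat_less_real_le) argo
    then show ?thesis using tri(2) P P' assms(3,4) by linarith
  next
    case 3
    then have "dist ?C ?C' \<le> (real b' - real a') / 2 - (real b - real a) / 2 - 1"
      unfolding CC' abs_le_iff by (simp add: nat_less_real_le) argo
    then show ?thesis using tri(1) P P' assms(3,4) by linarith
  next
    case 4
    then have "(real b - real a) / 2 + (real b' - real a') / 2 + 1 \<le> dist ?C ?C'"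
      unfolding CC' using \<open>real a + 1 \<le> real b\<close> by (simp add: nat_less_real_le) argo
    then show ?thesis using tri(3) P P' assms(3,4) by linarith
  next
    case 5
    then have "(real b - real a) / 2 + (real b' - real a') / 2 + 1 \<le> dist ?C ?C'"
      unfolding CC' using \<open>real a' + 1 \<le> real b'\<close> by (simp add: nat_less_real_le) argo
    then show ?thesis using tri(3) P P' assms(3,4) by linarith
  qed
qed

(* Layers i and r + 1 - i join up at the arc endpoints, since delta r (r + 1 - i) = - delta r i;
   only the absolute offset separates components. *)
definition meander_layer ::
  "nat \<Rightarrow> nat \<Rightarrow> bool list \<Rightarrow> bool list \<Rightarrow> (nat \<times> nat \<times> nat \<Rightarrow> bool) \<Rightarrow> nat \<Rightarrow> R3 set" where
  "meander_layer r s U W c i =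
     (\<Union>(a, b)\<in>{(a, b). matched U a b}. upper_arc r a b i)
   \<union> (\<Union>(a, b)\<in>{(a, b). matched W a b}. lower_arc r a b i)
   \<union> (\<Union>k\<in>{1..2 * s - 1}. (\<lambda>y. (real k + delta r i, y, zV r c k i y)) ` {-1/4..1/4})
   \<union> (\<lambda>x. (x, delta r i, zH r s c i x)) ` {- delta r i .. 2 * real s - delta r i}
   \<union> (\<lambda>y. (- delta r i, y, 0)) ` {-1/4 .. delta r i}
   \<union> (\<lambda>y. (2 * real s - delta r i, y, 0)) ` {delta r i .. 1/4}"

lemma meander_R3_eq_UN_layers: "meander_R3 r s U W c = (\<Union>i\<in>{1..r}. meander_layer r s U W c i)"
proof -
  have swap: "(\<Union>(a, b)\<in>M. \<Union>i\<in>{1..r}. f a b i) = (\<Union>i\<in>{1..r}. \<Union>(a, b)\<in>M. f a b i)"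
    for M :: "(nat \<times> nat) set" and f :: "nat \<Rightarrow> nat \<Rightarrow> nat \<Rightarrow> R3 set"
    by blast
  show ?thesis
    unfolding meander_R3_def meander_layer_def UN_Un_distrib swap
    by (simp only: SUP_commute[where B = "{1..r}"])
qed

lemma meander_layer_nonempty: "meander_layer r s U W c i \<noteq> {}"
proof -
  have "(- delta r i, delta r i, zH r s c i (- delta r i)) \<in> meander_layer r s U W c i"
    unfolding meander_layer_def by (intro UnI1 UnI2 image_eqI[where x = "- delta r i"]) auto
  then show ?thesis by blast
qed

lemma finite_matched: "finite {(a, b). matched xs a b}"
  by (rule finite_subset[of _ "{..length xs} \<times> {..length xs}"]) (auto simp: matched_def)

lemma continuous_on_tent_shift: "continuous_on S (\<lambda>x. tent r (x - a))"
  unfolding tent_def by (intro continuous_intros)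

lemma continuous_on_zV: "continuous_on S (zV r c k i)"
proof -
  have "continuous_on S (\<lambda>y. if c (k, i, j) then 0 else tent r (y - delta r j))" for j
    by (cases "c (k, i, j)") (simp_all add: continuous_on_tent_shift)
  then show ?thesis unfolding zV_def[abs_def] by (intro continuous_on_sum)
qed

lemma continuous_on_zH: "continuous_on S (zH r s c j)"
proof -
  have "continuous_on S (\<lambda>x. if c (k, i, j) then tent r (x - real k - delta r i) else 0)" for k i
    using continuous_on_tent_shift[of S r "real k + delta r i"]
    by (cases "c (k, i, j)") (simp_all add: diff_diff_eq)
  then show ?thesis unfolding zH_def[abs_def] by (intro continuous_on_sum)
qed

lemma compact_upper_arc: "compact (upper_arc r a b i)"
  unfolding upper_arc_def by (intro compact_continuous_image continuous_intros) simp

lemma compact_lower_arc: "compact (lower_arc r a b i)"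
  unfolding lower_arc_def by (intro compact_continuous_image continuous_intros) simp

lemma compact_meander_layer: "compact (meander_layer r s U W c i)"
  unfolding meander_layer_def
  by (intro compact_Un compact_UN finite_matched finite_atLeastAtMost compact_continuous_image
      continuous_intros continuous_on_zV continuous_on_zH compact_Icc)
    (auto simp: compact_upper_arc compact_lower_arc)

lemma at_int_offset_add: "at_int_offset d (of_int n + d)"
  and at_int_offset_diff: "at_int_offset d (of_int n - d)"
  unfolding at_int_offset_def by blast+

(* The strip case also absorbs the arc endpoints on the lines y = 1/4 and y = -1/4. *)
lemma meander_layer_cases:
  assumes i: "i \<in> {1..r}" and p: "p \<in> meander_layer r s U W c i"
  obtains (upper) a b x y where "matched U a b" "p = (x, y, 0)" "1/4 < y"
    "dist (x, y) ((real a + real b) / 2, 1/4) = (real b - real a) / 2 + delta r i"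
  | (lower) a b x y where "matched W a b" "p = (x, y, 0)" "y < - 1/4"
    "dist (x, y) ((real a + real b) / 2 - 1, - 1/4) = (real b - real a) / 2 + delta r i"
  | (strip) x y z where "p = (x, y, z)" "\<bar>y\<bar> \<le> 1/4" "at_int_offset (delta r i) x"
    "\<bar>y\<bar> < 1/4 \<Longrightarrow> x = - delta r i \<and> y \<le> delta r i \<or> x = 2 * real s - delta r i \<and> delta r i \<le> y
       \<or> (\<exists>k\<in>{1..2 * s - 1}. x = real k + delta r i \<and> z = zV r c k i y)"
  | (horizontal) x where "p = (x, delta r i, zH r s c i x)"
    "- delta r i \<le> x" "x \<le> 2 * real s - delta r i"
proof -
  have d: "\<bar>delta r i\<bar> < 1/8" by (rule abs_delta_less[OF i])
  consider (U) a b where "matched U a b" "p \<in> upper_arc r a b i"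
    | (W) a b where "matched W a b" "p \<in> lower_arc r a b i"
    | (V) k y where "k \<in> {1..2 * s - 1}" "\<bar>y\<bar> \<le> 1/4" "p = (real k + delta r i, y, zV r c k i y)"
    | (H) x where "p = (x, delta r i, zH r s c i x)" "- delta r i \<le> x" "x \<le> 2 * real s - delta r i"
    | (L) y where "p = (- delta r i, y, 0)" "- 1/4 \<le> y" "y \<le> delta r i"
    | (R) y where "p = (2 * real s - delta r i, y, 0)" "delta r i \<le> y" "y \<le> 1/4"
    using p unfolding meander_layer_def by (auto simp: abs_le_iff)
  then show thesis
  proof cases
    case (U a b)
    then have "a < b" by (simp add: matched_def)
    then show thesis
      by (rule upper_arc_point[OF i _ U(2)]) (use upper[OF U(1)] strip in fastforce)
  next
    case (W a b)
    then have "a < b" by (simp add: matched_def)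
    then show thesis
      by (rule lower_arc_point[OF i _ W(2)]) (use lower[OF W(1)] strip in fastforce)
  next
    case (V k y)
    then show thesis
      using strip at_int_offset_add[of "delta r i" "int k"] by auto
  next
    case H
    then show thesis by (rule horizontal)
  next
    case (L y)
    then show thesis
      using strip at_int_offset_diff[of "delta r i" 0] d by (auto simp: abs_le_iff abs_less_iff)
  next
    case (R y)
    then show thesis
      using strip at_int_offset_diff[of "delta r i" "int (2 * s)"] d by (auto simp: abs_le_iff abs_less_iff)
  qed
qed

lemma strip_meets_horizontal:
  assumes i: "i \<in> {1..r}" and j: "j \<in> {1..r}"
    and strip: "\<bar>y\<bar> < 1/4 \<Longrightarrow> x = - delta r i \<and> y \<le> delta r i \<or> x = 2 * real s - delta r i \<and> delta r i \<le> y
       \<or> (\<exists>k\<in>{1..2 * s - 1}. x = real k + delta r i \<and> z = zV r c k i y)"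
    and y: "y = delta r j" and x: "- delta r j \<le> x" "x \<le> 2 * real s - delta r j"
    and z: "z = zH r s c j x"
  shows "delta r i = delta r j"
proof -
  have "\<bar>y\<bar> < 1/4" using abs_delta_less[OF j] y by simp
  with strip consider "x = - delta r i" "y \<le> delta r i" | "x = 2 * real s - delta r i" "delta r i \<le> y"
    | k where "k \<in> {1..2 * s - 1}" "x = real k + delta r i" "z = zV r c k i y"
    by blast
  then show ?thesis
  proof cases
    case 3
    then show ?thesis using zV_neq_zH_at_crossing[OF 3(1) i j, of c] y z by simp
  qed (use x y in linarith)+
qed

lemma abs_delta_eq_if_layers_meet:
  assumes i: "i \<in> {1..r}" and j: "j \<in> {1..r}"
    and p_i: "p \<in> meander_layer r s U W c i" and p_j: "p \<in> meander_layer r s U W c j"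
  shows "\<bar>delta r i\<bar> = \<bar>delta r j\<bar>"
proof -
  have d: "\<bar>delta r i\<bar> < 1/8" "\<bar>delta r j\<bar> < 1/8"
    using abs_delta_less i j by blast+
  then have d': "\<bar>delta r i\<bar> < 1/2" "\<bar>delta r j\<bar> < 1/2" "\<bar>delta r i\<bar> < 1/4" "\<bar>delta r j\<bar> < 1/4"
    by simp_all
  from i p_i show ?thesis
  proof (cases rule: meander_layer_cases)
    case upper_i: (upper a b x y)
    from j p_j show ?thesis
    proof (cases rule: meander_layer_cases)
      case (upper a' b' x' y')
      then show ?thesis
        using matched_arcs_offset_eq[where t = 0, unfolded add_0_right, OF upper_i(1) upper(1) d'(1,2)]
          upper_i(2,4) by fastforce
    qed (use upper_i d in \<open>(simp add: abs_le_iff abs_less_iff; linarith)+\<close>)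
  next
    case lower_i: (lower a b x y)
    from j p_j show ?thesis
    proof (cases rule: meander_layer_cases)
      case (lower a' b' x' y')
      then show ?thesis
        using matched_arcs_offset_eq[where t = "- 1", unfolded add_uminus_conv_diff,
            OF lower_i(1) lower(1) d'(1,2)] lower_i(2,4)
        by fastforce
    qed (use lower_i d in \<open>(simp add: abs_le_iff abs_less_iff; linarith)+\<close>)
  next
    case strip_i: (strip x y z)
    from j p_j show ?thesis
    proof (cases rule: meander_layer_cases)
      case (strip x' y' z')
      then show ?thesis using at_int_offset_abs_eq[OF strip_i(3) _ d'(3,4)] strip_i(1) by simp
    next
      case (horizontal x')
      then show ?thesis using strip_meets_horizontal[OF i j strip_i(4)] strip_i(1) by simp
    qed (use strip_i d in \<open>(simp add: abs_le_iff abs_less_iff; linarith)+\<close>)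
  next
    case horizontal_i: (horizontal x)
    from j p_j show ?thesis
    proof (cases rule: meander_layer_cases)
      case (strip x' y' z')
      have "x' = x" "y' = delta r i" "z' = zH r s c i x" using strip(1) horizontal_i(1) by auto
      then have "delta r j = delta r i"
        using strip_meets_horizontal[OF j i strip(4)] horizontal_i(2,3) by blast
      then show ?thesis by simp
    next
      case (horizontal x')
      then show ?thesis using horizontal_i(1) by simp
    qed (use horizontal_i d in \<open>(simp add: abs_le_iff abs_less_iff; linarith)+\<close>)
  qed
qed

lemma card_image_le_if_homeomorphic_components:
  fixes f :: "'a::topological_space \<Rightarrow> 'b::metric_space" and T :: "'c::topological_space set"
  assumes "X homeomorphic ({..<n} \<times> T)" and "connected T"
    and f: "continuous_on X f" and fin: "finite (f ` X)"
  shows "card (f ` X) \<le> n"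
proof -
  from assms(1) obtain \<phi> \<psi> where h: "homeomorphism X ({..<n} \<times> T) \<phi> \<psi>"
    unfolding homeomorphic_def by blast
  let ?g = "f \<circ> \<psi>" and ?C = "\<lambda>k. {k} \<times> T"
  have \<psi>_img: "\<psi> ` ({..<n} \<times> T) = X" and g: "continuous_on ({..<n} \<times> T) ?g"
    using h f by (metis homeomorphism_def continuous_on_compose)+
  have img: "f ` X = (\<Union>k<n. ?g ` ?C k)"
    using \<psi>_img by auto
  have "card (?g ` ?C k) \<le> 1" if "k < n" for k
  proof -
    have sub: "?C k \<subseteq> {..<n} \<times> T" using that by auto
    have "connected (?g ` ?C k)"
      using \<open>connected T\<close> continuous_on_subset[OF g sub] by (intro connected_continuous_image) auto
    moreover have "finite (?g ` ?C k)"
      using fin img that by (metis UN_upper finite_subset lessThan_iff)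
    ultimately show ?thesis by (auto simp: connected_finite_iff_sing)
  qed
  then have "(\<Sum>k<n. card (?g ` ?C k)) \<le> n"
    using sum_mono[of "{..<n}" "\<lambda>k. card (?g ` ?C k)" "\<lambda>_. 1"] by simp
  moreover have "card (\<Union>k<n. ?g ` ?C k) \<le> (\<Sum>k<n. card (?g ` ?C k))"
    by (rule card_UN_le) simp
  ultimately show ?thesis unfolding img by linarith
qed

lemma card_le_if_homeomorphic_components_closed_cover:
  fixes P :: "'i \<Rightarrow> 'a::topological_space set" and v :: "'i \<Rightarrow> 'b::metric_space"
    and T :: "'c::topological_space set"
  assumes "(\<Union>i\<in>I. P i) homeomorphic ({..<n} \<times> T)" and "connected T" and "finite I"
    and closed: "\<And>i. i \<in> I \<Longrightarrow> closed (P i)" and nonempty: "\<And>i. i \<in> I \<Longrightarrow> P i \<noteq> {}"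
    and v: "\<And>i j x. i \<in> I \<Longrightarrow> j \<in> I \<Longrightarrow> x \<in> P i \<Longrightarrow> x \<in> P j \<Longrightarrow> v i = v j"
  shows "card (v ` I) \<le> n"
proof -
  define f where "f x = v (SOME i. i \<in> I \<and> x \<in> P i)" for x
  have f_eq: "f x = v i" if "i \<in> I" "x \<in> P i" for i x
    unfolding f_def by (rule someI2[of _ i]) (use that v in blast)+
  have "continuous_on (\<Union>i\<in>I. P i) f"
  proof (rule continuous_on_closed_Union[OF \<open>finite I\<close> closed])
    show "continuous_on (P i) f" if "i \<in> I" for i
      using continuous_on_const[of "P i" "v i"] f_eq[OF that] continuous_on_cong by force
  qed
  moreover have "f ` (\<Union>i\<in>I. P i) = v ` I"
    using f_eq nonempty by (fastforce simp: image_iff)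
  ultimately show ?thesis
    using card_image_le_if_homeomorphic_components[OF assms(1,2)] \<open>finite I\<close> by fastforce
qed

lemma continuous_on_inv_stereo: "continuous_on S inv_stereo"
proof -
  have "(norm x)\<^sup>2 + 1 \<noteq> (0::real)" for x :: R3
    by (simp add: add_nonneg_eq_0_iff)
  then show ?thesis
    unfolding inv_stereo_def[abs_def] by (intro continuous_intros) auto
qed

lemma inj_inv_stereo: "inj inv_stereo"
proof (rule injI)
  fix p q :: R3
  assume "inv_stereo p = inv_stereo q"
  then have scaled: "scaleR (2 / ((norm p)\<^sup>2 + 1)) p = scaleR (2 / ((norm q)\<^sup>2 + 1)) q"
    and height: "((norm p)\<^sup>2 - 1) / ((norm p)\<^sup>2 + 1) = ((norm q)\<^sup>2 - 1) / ((norm q)\<^sup>2 + 1)"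
    unfolding inv_stereo_def by auto
  have pos: "(norm p)\<^sup>2 + 1 > 0" "(norm q)\<^sup>2 + 1 > 0"
    by (simp_all add: add_nonneg_pos)
  from height pos have "(norm p)\<^sup>2 = (norm q)\<^sup>2"
    by (simp add: field_simps)
  then show "p = q" using scaled pos by simp
qed

lemma inv_stereo_in_S3: "inv_stereo p \<in> S3"
proof -
  let ?t = "(norm p)\<^sup>2"
  have pos: "?t + 1 > 0" by (simp add: add_nonneg_pos)
  have "(norm (inv_stereo p))\<^sup>2 = (4 * ?t + (?t - 1)\<^sup>2) / (?t + 1)\<^sup>2"
    unfolding inv_stereo_def
    by (simp add: norm_Pair power_mult_distrib power_divide add_divide_distrib)
  also have "4 * ?t + (?t - 1)\<^sup>2 = (?t + 1)\<^sup>2" by (simp add: power2_eq_square algebra_simps)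
  finally have "(norm (inv_stereo p))\<^sup>2 = 1" using pos by simp
  then show ?thesis unfolding S3_def using norm_ge_zero[of "inv_stereo p"] by (auto simp: power2_eq_1_iff)
qed

lemma homeomorphic_inv_stereo_image: "compact S \<Longrightarrow> S homeomorphic inv_stereo ` S"
  using homeomorphic_compact continuous_on_inv_stereo inj_inv_stereo by (metis inj_on_subset subset_UNIV)

lemma ambient_isotopic_imp_homeomorphic:
  assumes "A \<subseteq> S3" and "ambient_isotopic A B"
  shows "A homeomorphic B"
proof -
  obtain H :: "real \<times> (R3 \<times> real) \<Rightarrow> R3 \<times> real"
    where homeo: "\<forall>t\<in>{0..1}. \<exists>g. homeomorphism S3 S3 (\<lambda>x. H (t, x)) g"
      and img: "(\<lambda>x. H (1, x)) ` A = B"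
    using assms(2) unfolding ambient_isotopic_def by blast
  from homeo obtain g where "homeomorphism S3 S3 (\<lambda>x. H (1, x)) g" by force
  then have "homeomorphism A B (\<lambda>x. H (1, x)) g"
    using assms(1) img by (rule homeomorphism_of_subsets[OF _ _ order_refl])
  then show ?thesis unfolding homeomorphic_def by blast
qed

lemma delta_neg: "i \<in> {1..r div 2} \<Longrightarrow> delta r i < 0"
  by (auto simp: delta_def divide_neg_pos)

lemma card_abs_delta_ge: "r div 2 \<le> card ((\<lambda>i. \<bar>delta r i\<bar>) ` {1..r})"
proof -
  have "inj_on (\<lambda>i. \<bar>delta r i\<bar>) {1..r div 2}"
  proof (rule inj_onI)
    fix i j assume i: "i \<in> {1..r div 2}" and j: "j \<in> {1..r div 2}"
      and "\<bar>delta r i\<bar> = \<bar>delta r j\<bar>"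
    then have "delta r i = delta r j" using delta_neg[OF i] delta_neg[OF j] by simp
    then show "i = j" using i by (auto simp: delta_def)
  qed
  then have "card ((\<lambda>i. \<bar>delta r i\<bar>) ` {1..r div 2}) = r div 2"
    by (simp add: card_image)
  moreover have "card ((\<lambda>i. \<bar>delta r i\<bar>) ` {1..r div 2}) \<le> card ((\<lambda>i. \<bar>delta r i\<bar>) ` {1..r})"
    by (intro card_mono finite_imageI image_mono) auto
  ultimately show ?thesis by simp
qed

lemma meander_R3_components_ge:
  assumes "meander_R3 r s U W c homeomorphic ({..<n} \<times> sphere (0::complex) 1)"
  shows "r div 2 \<le> n"
proof -
  have "card ((\<lambda>i. \<bar>delta r i\<bar>) ` {1..r}) \<le> n"
    using assms unfolding meander_R3_eq_UN_layers
  proof (rule card_le_if_homeomorphic_components_closed_cover)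
    show "connected (sphere (0::complex) 1)" by (simp add: connected_sphere)
    show "closed (meander_layer r s U W c i)" for i
      by (rule compact_imp_closed[OF compact_meander_layer])
    show "meander_layer r s U W c i \<noteq> {}" for i by (rule meander_layer_nonempty)
    show "\<bar>delta r i\<bar> = \<bar>delta r j\<bar>"
      if "i \<in> {1..r}" "j \<in> {1..r}" "x \<in> meander_layer r s U W c i" "x \<in> meander_layer r s U W c j"
      for i j x
      using that by (rule abs_delta_eq_if_layers_meet)
  qed simp
  then show ?thesis using card_abs_delta_ge[of r] by linarith
qed

lemma meander_link_not_isotopic:
  assumes "K homeomorphic ({..<n} \<times> sphere (0::complex) 1)" and "n < r div 2"
  shows "\<not> ambient_isotopic (meander_link r s U W c) K"
proof
  assume "ambient_isotopic (meander_link r s U W c) K"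
  moreover have "meander_link r s U W c \<subseteq> S3"
    unfolding meander_link_def using inv_stereo_in_S3 by blast
  ultimately have "meander_link r s U W c homeomorphic K"
    by (rule ambient_isotopic_imp_homeomorphic[rotated])
  moreover have "meander_R3 r s U W c homeomorphic meander_link r s U W c"
    unfolding meander_link_def meander_R3_eq_UN_layers
    by (intro homeomorphic_inv_stereo_image compact_UN compact_meander_layer finite_atLeastAtMost)
  ultimately have "meander_R3 r s U W c homeomorphic ({..<n} \<times> sphere (0::complex) 1)"
    by (metis homeomorphic_trans assms(1))
  then have "r div 2 \<le> n" by (rule meander_R3_components_ge)
  with assms(2) show False by simp
qed

theorem proposition4p6:
  fixes K :: "(R3 \<times> real) set" and s :: "nat \<Rightarrow> nat"
  assumes "is_link K"
    and "\<And>r. r \<ge> 1 \<Longrightarrow> s r \<ge> 1"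
  shows "(\<lambda>r. meander_isotopy_prob r (s r) K) \<longlonglongrightarrow> 0"
proof (rule tendsto_eventually)
  obtain n :: nat where n: "K homeomorphic ({..<n} \<times> sphere (0::complex) 1)"
    using assms(1) unfolding is_link_def by blast
  have "meander_isotopy_prob r (s r) K = 0" if "2 * n + 2 \<le> r" for r
  proof -
    have "n < r div 2" using that by simp
    then have "{(U, W, c). U \<in> pstrings (s r) \<and> W \<in> pstrings (s r) \<and> c \<in> crossing_choices r (s r)
        \<and> ambient_isotopic (meander_link r (s r) U W c) K} = {}"
      using meander_link_not_isotopic[OF n] by auto
    then show ?thesis unfolding meander_isotopy_prob_def by (simp only: card.empty of_nat_0 div_0)
  qed
  then show "\<forall>\<^sub>F r in sequentially. meander_isotopy_prob r (s r) K = 0"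
    unfolding eventually_sequentially by blast
qed

end
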